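(* Let $A\in\mathbb{C}^{n\times n}$, and fix $A^-\in A\{1\}$ and $A^{GD}\in A\{GD\}$. Then $A^{-}AA^{GD}$ is the $(A^{-}A,\,AA^{GD})$-inverse of $A$.
   Context: For $A\in\mathbb{C}^{n\times n}$, $ind(A)$ is the smallest nonnegative integer $k$ with $\mathrm{rank}(A^k)=\mathrm{rank}(A^{k+1})$. $A\{1\}$ is the set of matrices $X$ with $AXA=A$. With $k=ind(A)$, $A\{GD\}$ is the set of G-Drazin inverses of $A$: matrices $X$ with $AXA=A$, $XA^{k+1}=A^k$, $A^{k+1}X=A^k$. For $A,B,C\in\mathbb{C}^{n\times n}$, a matrix $X$ is the $(B,C)$-inverse of $A$ if $XAB=B$, $CAX=C$, $N(C)\subseteq N(X)$ and $R(X)\subseteq R(B)$; $R(\cdot)$, $N(\cdot)$ denote range and null space. *)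

theory Defs
  imports "HOL-Analysis.Analysis"
begin

primrec mpow :: "'a::comm_ring_1^'n^'n \<Rightarrow> nat \<Rightarrow> 'a^'n^'n" where
  "mpow A 0 = mat 1"
| "mpow A (Suc k) = A ** mpow A k"

definition ind :: "complex^'n^'n \<Rightarrow> nat" where
  "ind A = (LEAST k. rank (mpow A k) = rank (mpow A (Suc k)))"

definition range_m :: "complex^'n^'n \<Rightarrow> (complex^'n) set" where
  "range_m X = range (\<lambda>v. X *v v)"

definition null_m :: "complex^'n^'n \<Rightarrow> (complex^'n) set" where
  "null_m X = {v. X *v v = 0}"

definition inner1 :: "complex^'n^'n \<Rightarrow> (complex^'n^'n) set" where
  "inner1 A = {X. A ** X ** A = A}"

definition GD_inverses :: "complex^'n^'n \<Rightarrow> (complex^'n^'n) set" where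
  "GD_inverses A = {X. A ** X ** A = A \<and>
      X ** mpow A (Suc (ind A)) = mpow A (ind A) \<and>
      mpow A (Suc (ind A)) ** X = mpow A (ind A)}"

definition is_BC_inverse :: "complex^'n^'n \<Rightarrow> complex^'n^'n \<Rightarrow> complex^'n^'n \<Rightarrow> complex^'n^'n \<Rightarrow> bool" where
  "is_BC_inverse A B C X \<longleftrightarrow> X ** A ** B = B \<and> C ** A ** X = C \<and>
      null_m C \<subseteq> null_m X \<and> range_m X \<subseteq> range_m B"

end

theory Submission
  imports Defs
begin

text \<open>Only the fact that both \<open>A\<^sup>-\<close> and \<open>A\<^sup>G\<^sup>D\<close> are inner inverses of \<open>A\<close> is needed:
  for inner inverses \<open>X\<close>, \<open>Y\<close> the two absorption identities collapse \<open>A X A\<close> and \<open>A Y A\<close>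
  back to \<open>A\<close>, while the null space and range conditions hold for any product
  \<open>X A Y\<close> because it is \<open>X A\<close> followed by \<open>Y\<close> and \<open>A Y\<close> preceded by \<open>X\<close>.\<close>

lemma null_m_subset_null_m_mult_left: "null_m C \<subseteq> null_m (B ** C)"
  by (auto simp: null_m_def matrix_vector_mul_assoc[symmetric])

lemma range_m_mult_subset: "range_m (B ** C) \<subseteq> range_m B"
  by (auto simp: range_m_def matrix_vector_mul_assoc[symmetric])

lemma is_BC_inverse_inner_inverses:
  assumes X: "A ** X ** A = A" and Y: "A ** Y ** A = A"
  shows "is_BC_inverse A (X ** A) (A ** Y) (X ** A ** Y)"
proof -
  have left: "X ** A ** Y ** A ** (X ** A) = X ** A"
  proof -
    have "X ** A ** Y ** A ** (X ** A) = X ** (A ** Y ** A) ** X ** A"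
      by (simp add: matrix_mul_assoc)
    also have "\<dots> = X ** (A ** X ** A)"
      using Y by (simp add: matrix_mul_assoc)
    finally show ?thesis using X by simp
  qed
  have right: "A ** Y ** A ** (X ** A ** Y) = A ** Y"
  proof -
    have "A ** Y ** A ** (X ** A ** Y) = (A ** Y ** A) ** X ** A ** Y"
      by (simp add: matrix_mul_assoc)
    also have "\<dots> = (A ** X ** A) ** Y"
      using Y by (simp add: matrix_mul_assoc)
    finally show ?thesis using X by simp
  qed
  have "null_m (A ** Y) \<subseteq> null_m (X ** A ** Y)"
    using null_m_subset_null_m_mult_left[of "A ** Y" X] by (simp add: matrix_mul_assoc)
  moreover have "range_m (X ** A ** Y) \<subseteq> range_m (X ** A)"
    by (rule range_m_mult_subset)
  ultimately show ?thesis
    using left right by (simp add: is_BC_inverse_def matrix_mul_assoc)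
qed

theorem theorem3p10:
  fixes A Am Agd :: "complex^'n^'n"
  assumes "Am \<in> inner1 A" and "Agd \<in> GD_inverses A"
  shows "is_BC_inverse A (Am ** A) (A ** Agd) (Am ** A ** Agd)"
proof (rule is_BC_inverse_inner_inverses)
  show "A ** Am ** A = A" using assms(1) by (simp add: inner1_def)
  show "A ** Agd ** A = A" using assms(2) by (simp add: GD_inverses_def)
qed

end
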